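(* For $n\ge3$: $\mathrm{St}(\mathfrak a_0(n))=\{I,X\}^{\otimes n}\cup\{Y,Z\}^{\otimes n}$; $\mathrm{St}(\mathfrak a_2(n))=\{P_I,P_{XY},P_{YX},P_Z\}$; $\mathrm{St}(\mathfrak a_3(n))=\mathrm{St}(\mathfrak a_6(n))=\{P_I,P_X,P_{YZ},P_{ZY}\}$; $\mathrm{St}(\mathfrak a_4(n))=\mathrm{St}(\mathfrak a_7(n))=\{P_I,P_X,P_Y,P_Z\}$; $\mathrm{St}(\mathfrak a_5(n))=\mathrm{St}(\mathfrak a_{10}(n))=\{P_I,P_{XYZ},P_{YZX},P_{ZXY}\}$; $\mathrm{St}(\mathfrak a_8(n))=\{P_I,P_Y,X_1,ZY\cdots Y\}$ (the last being $Z$ followed by $n-1$ copies of $Y$); $\mathrm{St}(\mathfrak a_9(n))=\{P_I,X_1,Y_1X_2,Z_1X_2\}$; $\mathrm{St}(\mathfrak a_{13}(n))=\mathrm{St}(\mathfrak a_{20}(n))=\{P_I,P_X\}$; $\mathrm{St}(\mathfrak a_{14}(n))=\{P_I,P_Z\}$; $\mathrm{St}(\mathfrak a_{15}(n))=\mathrm{St}(\mathfrak b_2(n))=\mathrm{St}(\mathfrak b_4(n))=\{P_I,X_1\}$; $\mathrm{St}(\mathfrak b_0(n))=\mathrm{St}(\mathfrak b_1(n))=\{I,X\}^{\otimes n}$; $\mathrm{St}(\mathfrak a_k(n))=\mathrm{St}(\mathfrak b_3(n))=\{P_I\}$ for $k\in\{11,12,16,17,18,19,21,22\}$.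
   Context: Pauli matrices $I,X,Y,Z$; $\mathcal P_n$ is the set of length-$n$ Pauli strings $A^1\otimes\cdots\otimes A^n$, $A^j\in\{I,X,Y,Z\}$. $A_j$ denotes $A$ at position $j$ and $I$ elsewhere; $A_iB_j$ the string with $A$ at $i$, $B$ at $j$, $I$ elsewhere. For a word $w$ over $\{I,X,Y,Z\}$, $P_w\in\mathcal P_n$ is the periodic repetition $www\cdots$ truncated to length $n$ (e.g. $P_I=I^{\otimes n}$, $P_X=X^{\otimes n}$, $P_{YZ}=YZYZ\cdots$). The stabilizer $\mathrm{St}(\mathfrak s)$ of a set $\mathfrak s$ of matrices is the set of all $P\in\mathcal P_n$ commuting with every element of $\mathfrak s$. For a set $S$ of Pauli strings, $\mathrm{Lie}\langle S\rangle$ is the smallest real Lie subalgebra of $\mathfrak u(2^n)$ containing $\{iP:P\in S\}$; for a set $G$ of two-qubit strings, $G(n)=\mathrm{Lie}\langle A_jB_{j+1}: AB\in G,1\le j\le n-1\rangle$. Generating sets: $\mathfrak a_0=\{XX\}$, $\mathfrak a_2=\{XY,YX\}$, $\mathfrak a_3=\{XX,YZ\}$, $\mathfrak a_4=\{XX,YY\}$, $\mathfrak a_5=\{XY,YZ\}$, $\mathfrak a_6=\{XX,YZ,ZY\}$, $\mathfrak a_7=\{XX,YY,ZZ\}$, $\mathfrak a_8=\{XX,XZ\}$, $\mathfrak a_9=\{XY,XZ\}$, $\mathfrak a_{10}=\{XY,YZ,ZX\}$, $\mathfrak a_{11}=\{XY,YX,YZ\}$, $\mathfrak a_{12}=\{XX,XY,YZ\}$,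 $\mathfrak a_{13}=\{XX,YY,YZ\}$, $\mathfrak a_{14}=\{XX,YY,XY\}$, $\mathfrak a_{15}=\{XX,XY,XZ\}$, $\mathfrak a_{16}=\{XY,YX,YZ,ZY\}$, $\mathfrak a_{17}=\{XX,XY,ZX\}$, $\mathfrak a_{18}=\{XX,XZ,YY,ZY\}$, $\mathfrak a_{19}=\{XX,XY,ZX,YZ\}$, $\mathfrak a_{20}=\{XX,YY,ZZ,ZY\}$, $\mathfrak a_{21}=\{XX,YY,XY,ZX\}$, $\mathfrak a_{22}=\{XX,XY,XZ,YX\}$, $\mathfrak b_0=\{XI,IX\}$, $\mathfrak b_1=\{XX,XI,IX\}$, $\mathfrak b_2=\{XY,XI,IX\}$, $\mathfrak b_3=\{XI,YI,IX,IY\}$, $\mathfrak b_4=\{XX,XY,XI,IX\}$. *)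

theory Defs
  imports Complex_Main "Jordan_Normal_Form.Matrix"
begin

datatype pauli = PI | PX | PY | PZ

fun pauli_entry :: "pauli \<Rightarrow> nat \<Rightarrow> nat \<Rightarrow> complex" where
  "pauli_entry PI r c = (if r = c then 1 else 0)"
| "pauli_entry PX r c = (if r \<noteq> c then 1 else 0)"
| "pauli_entry PY r c = (if r = c then 0 else if r = 0 then - \<i> else \<i>)"
| "pauli_entry PZ r c = (if r \<noteq> c then 0 else if r = 0 then 1 else -1)"

text \<open>A Pauli string of length n is a list of length n; its matrix is the
  Kronecker product A^1 \<otimes> ... \<otimes> A^n, a 2^n x 2^n complex matrix, where
  position j (0-based) corresponds to the binary digit of weight 2^(n-1-j).\<close>
definition bitj :: "nat \<Rightarrow> nat \<Rightarrow> nat \<Rightarrow> nat" where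
  "bitj n j r = (r div 2 ^ (n - 1 - j)) mod 2"

definition pmat :: "pauli list \<Rightarrow> complex mat" where
  "pmat w = (let n = length w in
     mat (2 ^ n) (2 ^ n)
       (\<lambda>(r, c). \<Prod>j<n. pauli_entry (w ! j) (bitj n j r) (bitj n j c)))"

definition pauli_strings :: "nat \<Rightarrow> pauli list set" where
  "pauli_strings n = {w. length w = n}"

inductive_set lie_closure :: "nat \<Rightarrow> complex mat set \<Rightarrow> complex mat set"
  for d :: nat and S :: "complex mat set" where
  zero: "0\<^sub>m d d \<in> lie_closure d S"
| gen: "M \<in> S \<Longrightarrow> M \<in> lie_closure d S"
| add: "A \<in> lie_closure d S \<Longrightarrow> B \<in> lie_closure d S \<Longrightarrow> A + B \<in> lie_closure d S"
| smult: "A \<in> lie_closure d S \<Longrightarrow> (complex_of_real r) \<cdot>\<^sub>m A \<in> lie_closure d S"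
| bracket: "A \<in> lie_closure d S \<Longrightarrow> B \<in> lie_closure d S \<Longrightarrow> A * B - B * A \<in> lie_closure d S"

definition Lie :: "nat \<Rightarrow> pauli list set \<Rightarrow> complex mat set" where
  "Lie n S = lie_closure (2 ^ n) ((\<lambda>P. \<i> \<cdot>\<^sub>m pmat P) ` S)"

definition two_local :: "nat \<Rightarrow> pauli \<Rightarrow> pauli \<Rightarrow> nat \<Rightarrow> pauli list" where
  "two_local n A B j = map (\<lambda>k. if k = j then A else if k = Suc j then B else PI) [0..<n]"

text \<open>G(n) for a set G of two-qubit strings (given as pairs (A,B) for AB).\<close>
definition lieG :: "(pauli \<times> pauli) set \<Rightarrow> nat \<Rightarrow> complex mat set" where
  "lieG G n = Lie n {two_local n A B j | A B j. (A, B) \<in> G \<and> Suc j < n}"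

definition St :: "nat \<Rightarrow> complex mat set \<Rightarrow> pauli list set" where
  "St n s = {P \<in> pauli_strings n. \<forall>M \<in> s. pmat P * M = M * pmat P}"

definition per :: "pauli list \<Rightarrow> nat \<Rightarrow> pauli list" where
  "per w n = map (\<lambda>k. w ! (k mod length w)) [0..<n]"

definition tens_set :: "pauli set \<Rightarrow> nat \<Rightarrow> pauli list set" where
  "tens_set A n = {w. length w = n \<and> set w \<subseteq> A}"

definition "a0 = {(PX,PX)}"
definition "a2 = {(PX,PY),(PY,PX)}"
definition "a3 = {(PX,PX),(PY,PZ)}"
definition "a4 = {(PX,PX),(PY,PY)}"
definition "a5 = {(PX,PY),(PY,PZ)}"
definition "a6 = {(PX,PX),(PY,PZ),(PZ,PY)}"
definition "a7 = {(PX,PX),(PY,PY),(PZ,PZ)}"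
definition "a8 = {(PX,PX),(PX,PZ)}"
definition "a9 = {(PX,PY),(PX,PZ)}"
definition "a10 = {(PX,PY),(PY,PZ),(PZ,PX)}"
definition "a11 = {(PX,PY),(PY,PX),(PY,PZ)}"
definition "a12 = {(PX,PX),(PX,PY),(PY,PZ)}"
definition "a13 = {(PX,PX),(PY,PY),(PY,PZ)}"
definition "a14 = {(PX,PX),(PY,PY),(PX,PY)}"
definition "a15 = {(PX,PX),(PX,PY),(PX,PZ)}"
definition "a16 = {(PX,PY),(PY,PX),(PY,PZ),(PZ,PY)}"
definition "a17 = {(PX,PX),(PX,PY),(PZ,PX)}"
definition "a18 = {(PX,PX),(PX,PZ),(PY,PY),(PZ,PY)}"
definition "a19 = {(PX,PX),(PX,PY),(PZ,PX),(PY,PZ)}"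
definition "a20 = {(PX,PX),(PY,PY),(PZ,PZ),(PZ,PY)}"
definition "a21 = {(PX,PX),(PY,PY),(PX,PY),(PZ,PX)}"
definition "a22 = {(PX,PX),(PX,PY),(PX,PZ),(PY,PX)}"
definition "b0 = {(PX,PI),(PI,PX)}"
definition "b1 = {(PX,PX),(PX,PI),(PI,PX)}"
definition "b2 = {(PX,PY),(PX,PI),(PI,PX)}"
definition "b3 = {(PX,PI),(PY,PI),(PI,PX),(PI,PY)}"
definition "b4 = {(PX,PX),(PX,PY),(PX,PI),(PI,PX)}"

end

theory Submission
  imports Defs
begin

text \<open>Two Pauli strings commute iff they anticommute at an even number of positions. The
  commutant of a matrix is closed under real linear combinations and commutators, so a string
  stabilizes G(n) iff it commutes with every generator A_j B_(j+1), i.e. iff each neighbouring pair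
  of letters (p_j, p_(j+1)) satisfies: for all AB in G, p_j anticommutes with A exactly when
  p_(j+1) anticommutes with B. The stabilizer is therefore the set of length-n walks in a graph on
  {I, X, Y, Z}. For a0, b0 and b1 this graph is an equivalence relation or the complete graph on
  {I, X}; in every other case the walks of length 3 are enumerated, and the claimed family is
  mapped onto itself when every admissible letter is prepended.\<close>

lemma bitj_mod: "j < m \<Longrightarrow> bitj m j (r mod 2 ^ m) = bitj m j r"
proof -
  assume "j < m"
  then have "m - 1 - j < m" by arith
  then show ?thesis
    unfolding bitj_def
    by (metis bit_iff_odd bit_take_bit_iff take_bit_eq_mod odd_iff_mod_2_eq_one not_mod_2_eq_1_eq_0)
qed

lemma bitj_Suc_0: "r < 2 * 2 ^ m \<Longrightarrow> bitj (Suc m) 0 r = r div 2 ^ m"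
  by (simp add: bitj_def less_mult_imp_div_less)

lemma bitj_Suc_Suc: "j < m \<Longrightarrow> bitj (Suc m) (Suc j) r = bitj m j (r mod 2 ^ m)"
  by (simp add: bitj_mod) (simp add: bitj_def)

definition pstring_entry :: "pauli list \<Rightarrow> nat \<Rightarrow> nat \<Rightarrow> complex" where
  "pstring_entry w r c =
     (\<Prod>j<length w. pauli_entry (w ! j) (bitj (length w) j r) (bitj (length w) j c))"

lemma pmat_carrier: "pmat w \<in> carrier_mat (2 ^ length w) (2 ^ length w)"
  by (simp add: pmat_def Let_def)

lemma pmat_index: "r < 2 ^ length w \<Longrightarrow> c < 2 ^ length w \<Longrightarrow> pmat w $$ (r, c) = pstring_entry w r c"
  by (simp add: pmat_def Let_def pstring_entry_def)

lemma pstring_entry_Cons: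
  "r < 2 * 2 ^ length w \<Longrightarrow> c < 2 * 2 ^ length w \<Longrightarrow>
   pstring_entry (a # w) r c =
     pauli_entry a (r div 2 ^ length w) (c div 2 ^ length w) *
     pstring_entry w (r mod 2 ^ length w) (c mod 2 ^ length w)"
  unfolding pstring_entry_def length_Cons prod.lessThan_Suc_shift
  by (simp add: bitj_Suc_0 bitj_Suc_Suc del: prod.lessThan_Suc)

lemma sum_lessThan_double:
  "(\<Sum>k<2 * (N::nat). f k) = (\<Sum>k<N. f k) + (\<Sum>k<N. f (N + k) :: 'a :: comm_monoid_add)"
  by (simp add: mult_2 lessThan_atLeast0 sum.atLeastLessThan_concat[symmetric]
      sum.shift_bounds_nat_ivl[symmetric] add.commute)

definition pauli_mult_entry :: "pauli \<Rightarrow> pauli \<Rightarrow> nat \<Rightarrow> nat \<Rightarrow> complex" where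
  "pauli_mult_entry a b r c = (\<Sum>k<2. pauli_entry a r k * pauli_entry b k c)"

definition pstring_mult_entry :: "pauli list \<Rightarrow> pauli list \<Rightarrow> nat \<Rightarrow> nat \<Rightarrow> complex" where
  "pstring_mult_entry w v r c = (\<Sum>k<2 ^ length w. pstring_entry w r k * pstring_entry v k c)"

lemma pauli_mult_entry_expand:
  "pauli_mult_entry a b r c = pauli_entry a r 0 * pauli_entry b 0 c + pauli_entry a r 1 * pauli_entry b 1 c"
  by (simp add: pauli_mult_entry_def numeral_2_eq_2)

lemma pstring_mult_entry_Cons:
  assumes "length v = length w" and "r < 2 * 2 ^ length w" and "c < 2 * 2 ^ length w"
  shows "pstring_mult_entry (a # w) (b # v) r c =
    pauli_mult_entry a b (r div 2 ^ length w) (c div 2 ^ length w) *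
    pstring_mult_entry w v (r mod 2 ^ length w) (c mod 2 ^ length w)"
proof -
  let ?N = "2 ^ length w :: nat"
  let ?tail = "\<lambda>k. pstring_entry w (r mod ?N) k * pstring_entry v k (c mod ?N)"
  have low: "pstring_entry (a # w) r k * pstring_entry (b # v) k c =
      pauli_entry a (r div ?N) 0 * pauli_entry b 0 (c div ?N) * ?tail k" if "k < ?N" for k
    using that assms by (simp add: pstring_entry_Cons)
  have high: "pstring_entry (a # w) r (?N + k) * pstring_entry (b # v) (?N + k) c =
      pauli_entry a (r div ?N) 1 * pauli_entry b 1 (c div ?N) * ?tail k" if "k < ?N" for k
    using that assms by (simp add: pstring_entry_Cons)
  have "pstring_mult_entry (a # w) (b # v) r c =
      (\<Sum>k<?N. pstring_entry (a # w) r k * pstring_entry (b # v) k c) +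
      (\<Sum>k<?N. pstring_entry (a # w) r (?N + k) * pstring_entry (b # v) (?N + k) c)"
    unfolding pstring_mult_entry_def by (simp add: sum_lessThan_double)
  also have "\<dots> = pauli_entry a (r div ?N) 0 * pauli_entry b 0 (c div ?N) * (\<Sum>k<?N. ?tail k) +
      pauli_entry a (r div ?N) 1 * pauli_entry b 1 (c div ?N) * (\<Sum>k<?N. ?tail k)"
    by (simp add: low high sum_distrib_left)
  finally show ?thesis
    by (simp add: pstring_mult_entry_def pauli_mult_entry_expand distrib_right)
qed

definition anticommute :: "pauli \<Rightarrow> pauli \<Rightarrow> bool" where
  "anticommute a b \<longleftrightarrow> a \<noteq> PI \<and> b \<noteq> PI \<and> a \<noteq> b"

definition comm_sign :: "pauli \<Rightarrow> pauli \<Rightarrow> complex" where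
  "comm_sign a b = (if anticommute a b then -1 else 1)"

lemma pauli_mult_entry_swap:
  "r < 2 \<Longrightarrow> c < 2 \<Longrightarrow> pauli_mult_entry a b r c = comm_sign a b * pauli_mult_entry b a r c"
  by (cases a; cases b; auto simp: less_2_cases_iff pauli_mult_entry_expand comm_sign_def anticommute_def)

lemma pauli_mult_entry_row0_nonzero: "\<exists>c<2. pauli_mult_entry a b 0 c \<noteq> 0"
proof -
  have "pauli_mult_entry a b 0 0 \<noteq> 0 \<or> pauli_mult_entry a b 0 1 \<noteq> 0"
    by (cases a; cases b; simp add: pauli_mult_entry_expand)
  then show ?thesis
    by (elim disjE) (auto intro: exI[of _ 0] exI[of _ 1])
qed

lemma pstring_mult_entry_swap:
  "length v = length w \<Longrightarrow> r < 2 ^ length w \<Longrightarrow> c < 2 ^ length w \<Longrightarrow>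
   pstring_mult_entry w v r c = (\<Prod>j<length w. comm_sign (w ! j) (v ! j)) * pstring_mult_entry v w r c"
proof (induction w arbitrary: v r c)
  case Nil
  then show ?case by (simp add: pstring_mult_entry_def)
next
  case (Cons a w)
  then obtain b v' where v: "v = b # v'" and len: "length v' = length w"
    by (cases v) auto
  let ?N = "2 ^ length w :: nat"
  have rc: "r < 2 * ?N" "c < 2 * ?N"
    using Cons.prems by simp_all
  then have "r div ?N < 2" "c div ?N < 2"
    by (simp_all add: less_mult_imp_div_less)
  then have head: "pauli_mult_entry a b (r div ?N) (c div ?N) = comm_sign a b * pauli_mult_entry b a (r div ?N) (c div ?N)"
    by (rule pauli_mult_entry_swap)
  have tail: "pstring_mult_entry w v' (r mod ?N) (c mod ?N) =
      (\<Prod>j<length w. comm_sign (w ! j) (v' ! j)) * pstring_mult_entry v' w (r mod ?N) (c mod ?N)"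
    using Cons.IH[OF len] by simp
  have sign: "(\<Prod>j<length (a # w). comm_sign ((a # w) ! j) ((b # v') ! j)) =
      comm_sign a b * (\<Prod>j<length w. comm_sign (w ! j) (v' ! j))"
    by (simp only: length_Cons prod.lessThan_Suc_shift nth_Cons_0 nth_Cons_Suc)
  have swap: "pstring_mult_entry (b # v') (a # w) r c =
      pauli_mult_entry b a (r div ?N) (c div ?N) * pstring_mult_entry v' w (r mod ?N) (c mod ?N)"
    using pstring_mult_entry_Cons[of w v' r c b a] len rc by simp
  show ?case
    unfolding v pstring_mult_entry_Cons[OF len rc] swap head tail sign by (simp only: mult_ac)
qed

lemma pstring_mult_entry_row0_nonzero:
  "length v = length w \<Longrightarrow> \<exists>c<2 ^ length w. pstring_mult_entry w v 0 c \<noteq> 0"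
proof (induction w arbitrary: v)
  case Nil
  then show ?case by (simp add: pstring_mult_entry_def pstring_entry_def)
next
  case (Cons a w)
  then obtain b v' where v: "v = b # v'" and len: "length v' = length w"
    by (cases v) auto
  let ?N = "2 ^ length w :: nat"
  obtain c0 where c0: "c0 < ?N" "pstring_mult_entry w v' 0 c0 \<noteq> 0"
    using Cons.IH[OF len] by blast
  obtain c1 where c1: "c1 < 2" "pauli_mult_entry a b 0 c1 \<noteq> 0"
    using pauli_mult_entry_row0_nonzero by blast
  have "c1 * ?N + c0 < (c1 + 1) * ?N"
    using c0 by simp
  also have "\<dots> \<le> 2 * ?N"
    using c1 by (intro mult_right_mono) simp_all
  finally have "c1 * ?N + c0 < 2 * ?N" .
  moreover have "(c1 * ?N + c0) div ?N = c1" "(c1 * ?N + c0) mod ?N = c0"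
    using c0 by simp_all
  ultimately have "pstring_mult_entry (a # w) v 0 (c1 * ?N + c0) \<noteq> 0"
    unfolding v using pstring_mult_entry_Cons[OF len, of 0 "c1 * ?N + c0" a b] c0 c1 by simp
  then show ?case
    using \<open>c1 * ?N + c0 < 2 * ?N\<close> by (intro exI[of _ "c1 * ?N + c0"]) simp
qed

lemma pmat_mult_index:
  "length v = length w \<Longrightarrow> r < 2 ^ length w \<Longrightarrow> c < 2 ^ length w \<Longrightarrow>
   (pmat w * pmat v) $$ (r, c) = pstring_mult_entry w v r c"
  using pmat_carrier[of w] pmat_carrier[of v]
  by (auto simp: index_mult_mat scalar_prod_def pstring_mult_entry_def pmat_index lessThan_atLeast0
      intro!: sum.cong)

lemma pmat_commute_iff:
  assumes len: "length v = length w"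
  shows "pmat w * pmat v = pmat v * pmat w \<longleftrightarrow> (\<Prod>j<length w. comm_sign (w ! j) (v ! j)) = 1"
proof
  assume comm: "pmat w * pmat v = pmat v * pmat w"
  obtain c where c: "c < 2 ^ length w" "pstring_mult_entry v w 0 c \<noteq> 0"
    using pstring_mult_entry_row0_nonzero[of w v] len by auto
  have "pstring_mult_entry w v 0 c = pstring_mult_entry v w 0 c"
    using arg_cong[OF comm, of "\<lambda>M. M $$ (0, c)"] c len by (simp add: pmat_mult_index)
  then show "(\<Prod>j<length w. comm_sign (w ! j) (v ! j)) = 1"
    using pstring_mult_entry_swap[OF len, of 0 c] c by simp
next
  assume sign: "(\<Prod>j<length w. comm_sign (w ! j) (v ! j)) = 1"
  show "pmat w * pmat v = pmat v * pmat w"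
  proof (rule eq_matI)
    fix r c
    assume "r < dim_row (pmat v * pmat w)" "c < dim_col (pmat v * pmat w)"
    then have "r < 2 ^ length w" "c < 2 ^ length w"
      using len by (simp_all add: pmat_def Let_def)
    then show "(pmat w * pmat v) $$ (r, c) = (pmat v * pmat w) $$ (r, c)"
      using len pstring_mult_entry_swap[OF len] sign by (simp add: pmat_mult_index)
  qed (use len in \<open>simp_all add: pmat_def Let_def\<close>)
qed

lemma smult_mat_cancel:
  fixes A B :: "'a :: field mat"
  assumes "k \<noteq> 0" and "k \<cdot>\<^sub>m A = k \<cdot>\<^sub>m B"
  shows "A = B"
proof -
  have dims: "dim_row A = dim_row B" "dim_col A = dim_col B"
    using arg_cong[OF assms(2), of dim_row] arg_cong[OF assms(2), of dim_col] by simp_all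
  show ?thesis
  proof (rule eq_matI)
    fix i j
    assume "i < dim_row B" "j < dim_col B"
    then show "A $$ (i, j) = B $$ (i, j)"
      using arg_cong[OF assms(2), of "\<lambda>M. M $$ (i, j)"] assms(1) dims by simp
  qed (use dims in auto)
qed

lemma lie_closure_commute:
  assumes X: "X \<in> carrier_mat d d"
    and S: "\<forall>M\<in>S. M \<in> carrier_mat d d \<and> X * M = M * X"
    and M: "M \<in> lie_closure d S"
  shows "M \<in> carrier_mat d d \<and> X * M = M * X"
  using M
proof induction
  case zero
  then show ?case using X by simp
next
  case (gen M)
  then show ?case using S by auto
next
  case (add A B)
  then have A: "A \<in> carrier_mat d d" and B: "B \<in> carrier_mat d d"
    and XA: "X * A = A * X" and XB: "X * B = B * X" by auto
  have "X * (A + B) = X * A + X * B" by (rule mult_add_distrib_mat[OF X A B])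
  also have "\<dots> = (A + B) * X" using XA XB add_mult_distrib_mat[OF A B X] by simp
  finally show ?case using A B by simp
next
  case (smult A r)
  then have A: "A \<in> carrier_mat d d" and XA: "X * A = A * X" by auto
  show ?case using mult_smult_distrib[OF X A] mult_smult_assoc_mat[OF A X] XA A by simp
next
  case (bracket A B)
  then have A: "A \<in> carrier_mat d d" and B: "B \<in> carrier_mat d d"
    and XA: "X * A = A * X" and XB: "X * B = B * X" by auto
  have AB: "A * B \<in> carrier_mat d d" and BA: "B * A \<in> carrier_mat d d"
    using A B by simp_all
  have "X * (A * B - B * A) = X * A * B - X * B * A"
    using A B X mult_minus_distrib_mat[OF X AB BA] by simp
  also have "\<dots> = A * B * X - B * A * X"
    using A B X XA XB by (simp add: assoc_mult_mat[of _ d d _ d _ d])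
  also have "\<dots> = (A * B - B * A) * X"
    using minus_mult_distrib_mat[OF AB BA X] by simp
  finally show ?case using AB BA minus_carrier_mat[OF BA, of "A * B"] by simp
qed

lemma St_Lie_eq_commuting:
  assumes "T \<subseteq> pauli_strings n"
  shows "St n (Lie n T) = {P \<in> pauli_strings n. \<forall>Q\<in>T. pmat P * pmat Q = pmat Q * pmat P}"
proof -
  let ?S = "(\<lambda>Q. \<i> \<cdot>\<^sub>m pmat Q) ` T"
  have carrier: "pmat Q \<in> carrier_mat (2 ^ n) (2 ^ n)" if "Q \<in> pauli_strings n" for Q
    using that pmat_carrier[of Q] by (simp add: pauli_strings_def)
  have commute_gen: "pmat P * (\<i> \<cdot>\<^sub>m pmat Q) = (\<i> \<cdot>\<^sub>m pmat Q) * pmat P \<longleftrightarrow>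
      pmat P * pmat Q = pmat Q * pmat P"
    if "P \<in> pauli_strings n" "Q \<in> T" for P Q
  proof -
    have "pmat P * (\<i> \<cdot>\<^sub>m pmat Q) = \<i> \<cdot>\<^sub>m (pmat P * pmat Q)"
         "(\<i> \<cdot>\<^sub>m pmat Q) * pmat P = \<i> \<cdot>\<^sub>m (pmat Q * pmat P)"
      using that assms carrier[of P] carrier[of Q]
      by (auto simp: mult_smult_distrib mult_smult_assoc_mat)
    then show ?thesis
      by (metis complex_i_not_zero smult_mat_cancel)
  qed
  have "(\<forall>M\<in>lie_closure (2 ^ n) ?S. pmat P * M = M * pmat P) \<longleftrightarrow>
      (\<forall>Q\<in>T. pmat P * pmat Q = pmat Q * pmat P)" if P: "P \<in> pauli_strings n" for P
  proof
    assume "\<forall>M\<in>lie_closure (2 ^ n) ?S. pmat P * M = M * pmat P"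
    then show "\<forall>Q\<in>T. pmat P * pmat Q = pmat Q * pmat P"
      using commute_gen[OF P] by (blast intro: lie_closure.gen)
  next
    assume "\<forall>Q\<in>T. pmat P * pmat Q = pmat Q * pmat P"
    then have "\<forall>M\<in>?S. M \<in> carrier_mat (2 ^ n) (2 ^ n) \<and> pmat P * M = M * pmat P"
      using commute_gen[OF P] carrier assms by auto
    then show "\<forall>M\<in>lie_closure (2 ^ n) ?S. pmat P * M = M * pmat P"
      using lie_closure_commute[OF carrier[OF P]] by blast
  qed
  then show ?thesis
    unfolding St_def Lie_def by blast
qed

definition compatible :: "(pauli \<times> pauli) set \<Rightarrow> pauli \<Rightarrow> pauli \<Rightarrow> bool" where
  "compatible G p q \<longleftrightarrow> (\<forall>A B. (A, B) \<in> G \<longrightarrow> (anticommute p A \<longleftrightarrow> anticommute q B))"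

definition walks :: "(pauli \<Rightarrow> pauli \<Rightarrow> bool) \<Rightarrow> nat \<Rightarrow> pauli list set" where
  "walks R n = {P. length P = n \<and> (\<forall>j. Suc j < n \<longrightarrow> R (P ! j) (P ! Suc j))}"

lemma length_two_local [simp]: "length (two_local n A B j) = n"
  by (simp add: two_local_def)

lemma nth_two_local:
  "k < n \<Longrightarrow> two_local n A B j ! k = (if k = j then A else if k = Suc j then B else PI)"
  by (simp add: two_local_def)

lemma pmat_commute_two_local_iff:
  assumes "length P = n" and "Suc j < n"
  shows "pmat P * pmat (two_local n A B j) = pmat (two_local n A B j) * pmat P \<longleftrightarrow>
    (anticommute (P ! j) A \<longleftrightarrow> anticommute (P ! Suc j) B)"
proof -
  have "(\<Prod>k<n. comm_sign (P ! k) (two_local n A B j ! k)) =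
      (\<Prod>k\<in>{j, Suc j}. comm_sign (P ! k) (two_local n A B j ! k))"
    using assms
    by (intro prod.mono_neutral_right) (auto simp: nth_two_local comm_sign_def anticommute_def)
  also have "\<dots> = comm_sign (P ! j) A * comm_sign (P ! Suc j) B"
    using assms by (simp add: nth_two_local)
  finally show ?thesis
    using assms by (simp add: pmat_commute_iff comm_sign_def)
qed

lemma St_lieG_eq_walks: "St n (lieG G n) = walks (compatible G) n"
proof -
  let ?T = "{two_local n A B j | A B j. (A, B) \<in> G \<and> Suc j < n}"
  have strings: "?T \<subseteq> pauli_strings n"
    by (auto simp: pauli_strings_def)
  have commuting_iff: "(\<forall>Q\<in>?T. pmat P * pmat Q = pmat Q * pmat P) \<longleftrightarrow>
      (\<forall>j. Suc j < n \<longrightarrow> compatible G (P ! j) (P ! Suc j))" if "length P = n" for P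
  proof -
    have "(\<forall>Q\<in>?T. pmat P * pmat Q = pmat Q * pmat P) \<longleftrightarrow> (\<forall>A B j. (A, B) \<in> G \<and> Suc j < n \<longrightarrow>
        pmat P * pmat (two_local n A B j) = pmat (two_local n A B j) * pmat P)"
      by blast
    also have "\<dots> \<longleftrightarrow> (\<forall>A B j. (A, B) \<in> G \<and> Suc j < n \<longrightarrow>
        (anticommute (P ! j) A \<longleftrightarrow> anticommute (P ! Suc j) B))"
      using that by (simp add: pmat_commute_two_local_iff)
    finally show ?thesis
      by (auto simp: compatible_def)
  qed
  show ?thesis
    unfolding lieG_def St_Lie_eq_commuting[OF strings] walks_def pauli_strings_def
    using commuting_iff by blast
qed

lemma Collect_pauli:
  "{p. Q p} = (if Q PI then {PI} else {}) \<union> (if Q PX then {PX} else {}) \<union>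
     (if Q PY then {PY} else {}) \<union> (if Q PZ then {PZ} else {})"
proof (rule Set.set_eqI)
  fix p :: pauli
  show "p \<in> {p. Q p} \<longleftrightarrow> p \<in> (if Q PI then {PI} else {}) \<union> (if Q PX then {PX} else {}) \<union>
     (if Q PY then {PY} else {}) \<union> (if Q PZ then {PZ} else {})"
    by (cases p) simp_all
qed

lemma walks_Suc_0: "walks R (Suc 0) = (\<lambda>p. [p]) ` {PI, PX, PY, PZ}"
proof -
  have "walks R (Suc 0) = range (\<lambda>p. [p])"
    by (auto simp: walks_def length_Suc_conv)
  also have "range (\<lambda>p. [p]) = (\<lambda>p. [p]) ` {PI, PX, PY, PZ}"
    by (auto intro: pauli.exhaust)
  finally show ?thesis .
qed

lemma Cons_in_walks_iff:
  assumes "length w = Suc n"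
  shows "p # w \<in> walks R (Suc (Suc n)) \<longleftrightarrow> w \<in> walks R (Suc n) \<and> R p (hd w)"
proof -
  obtain q v where "w = q # v"
    using assms by (cases w) auto
  then show ?thesis
    using assms by (auto simp: walks_def All_less_Suc2 simp del: All_less_Suc)
qed

lemma walks_Suc_Suc:
  "walks R (Suc (Suc n)) = (\<Union>w\<in>walks R (Suc n). (\<lambda>p. p # w) ` {p. R p (hd w)})"
proof (intro equalityI subsetI)
  fix P
  assume P: "P \<in> walks R (Suc (Suc n))"
  then obtain p w where "P = p # w" and "length w = Suc n"
    by (auto simp: walks_def length_Suc_conv)
  then show "P \<in> (\<Union>w\<in>walks R (Suc n). (\<lambda>p. p # w) ` {p. R p (hd w)})"
    using P Cons_in_walks_iff by blast
next
  fix P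
  assume "P \<in> (\<Union>w\<in>walks R (Suc n). (\<lambda>p. p # w) ` {p. R p (hd w)})"
  then obtain p w where "P = p # w" and "w \<in> walks R (Suc n)" and "R p (hd w)"
    by blast
  moreover from \<open>w \<in> walks R (Suc n)\<close> have "length w = Suc n"
    by (simp add: walks_def)
  ultimately show "P \<in> walks R (Suc (Suc n))"
    using Cons_in_walks_iff by blast
qed

text \<open>The base case is the length-3 walk set unfolded into an explicit finite union, so that
  for a concrete relation it is evaluated by simplification.\<close>
lemma walks_eq_from_3:
  assumes base: "(\<Union>v\<in>(\<Union>w\<in>(\<lambda>p. [p]) ` {PI, PX, PY, PZ}. (\<lambda>p. p # w) ` {p. R p (hd w)}).
      (\<lambda>p. p # v) ` {p. R p (hd v)}) = W 3"
    and step: "\<And>m. W (Suc (Suc (Suc (Suc m)))) =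
      (\<Union>w\<in>W (Suc (Suc (Suc m))). (\<lambda>p. p # w) ` {p. R p (hd w)})"
    and n: "3 \<le> n"
  shows "walks R n = W n"
proof -
  have "walks R (Suc (Suc (Suc m))) = W (Suc (Suc (Suc m)))" for m
  proof (induction m)
    case 0
    then show ?case using base by (simp add: numeral_3_eq_3 walks_Suc_Suc walks_Suc_0)
  next
    case (Suc m)
    then show ?case by (simp only: walks_Suc_Suc[of R "Suc (Suc m)"] step)
  qed
  moreover have "n = Suc (Suc (Suc (n - 3)))"
    using n by arith
  ultimately show ?thesis
    by metis
qed

lemma per_Suc: "w \<noteq> [] \<Longrightarrow> per w (Suc n) = hd w # per (rotate1 w) n"
  by (simp add: per_def upt_conv_Cons map_Suc_upt[symmetric] hd_conv_nth nth_rotate1 mod_Suc_eq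
      del: upt_Suc)

lemma per_0 [simp]: "per w 0 = []"
  by (simp add: per_def)

lemma per_singleton [simp]: "per [a] n = replicate n a"
  by (simp add: per_def map_replicate_const)

lemma compatible_empty [simp]: "compatible {} p q"
  by (simp add: compatible_def)

lemma compatible_insert [simp]:
  "compatible (insert (A, B) G) p q \<longleftrightarrow> (anticommute p A \<longleftrightarrow> anticommute q B) \<and> compatible G p q"
  by (auto simp: compatible_def)

lemma walks_of_equivalence:
  assumes R: "\<And>p q. R p q \<longleftrightarrow> (h p \<longleftrightarrow> h q)"
  shows "walks R n = {P. length P = n \<and> ((\<forall>x\<in>set P. h x) \<or> (\<forall>x\<in>set P. \<not> h x))}"
proof (intro equalityI subsetI)
  fix P
  assume "P \<in> walks R n"
  then have len: "length P = n" and steps: "\<forall>j. Suc j < n \<longrightarrow> (h (P ! j) \<longleftrightarrow> h (P ! Suc j))"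
    by (auto simp: walks_def R)
  have "h (P ! k) \<longleftrightarrow> h (P ! 0)" if "k < n" for k
    using that steps by (induction k) auto
  then show "P \<in> {P. length P = n \<and> ((\<forall>x\<in>set P. h x) \<or> (\<forall>x\<in>set P. \<not> h x))}"
    using len by (auto simp: in_set_conv_nth)
next
  fix P
  assume "P \<in> {P. length P = n \<and> ((\<forall>x\<in>set P. h x) \<or> (\<forall>x\<in>set P. \<not> h x))}"
  then show "P \<in> walks R n"
    by (auto simp: walks_def R nth_mem)
qed

lemma walks_of_conjunction:
  assumes R: "\<And>p q. R p q \<longleftrightarrow> g p \<and> g q" and "2 \<le> n"
  shows "walks R n = {P. length P = n \<and> (\<forall>x\<in>set P. g x)}"
proof (intro equalityI subsetI)
  fix P
  assume "P \<in> walks R n"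
  then have len: "length P = n" and steps: "\<forall>j. Suc j < n \<longrightarrow> g (P ! j) \<and> g (P ! Suc j)"
    by (auto simp: walks_def R)
  have "g (P ! k)" if "k < n" for k
  proof (cases "Suc k < n")
    case True
    then show ?thesis using steps by blast
  next
    case False
    then have "Suc (k - 1) < n" and "k = Suc (k - 1)"
      using that \<open>2 \<le> n\<close> by arith+
    then show ?thesis using steps by metis
  qed
  then show "P \<in> {P. length P = n \<and> (\<forall>x\<in>set P. g x)}"
    using len by (auto simp: in_set_conv_nth)
next
  fix P
  assume "P \<in> {P. length P = n \<and> (\<forall>x\<in>set P. g x)}"
  then show "P \<in> walks R n"
    by (auto simp: walks_def R nth_mem)
qed

lemmas generator_defs = a0_def a2_def a3_def a4_def a5_def a6_def a7_def a8_def a9_def a10_def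
  a11_def a12_def a13_def a14_def a15_def a16_def a17_def a18_def a19_def a20_def a21_def a22_def
  b0_def b1_def b2_def b3_def b4_def

lemmas walk_enumeration_simps = Collect_pauli generator_defs per_Suc numeral_3_eq_3 anticommute_def

lemma walks_compatible_trivial:
  assumes "3 \<le> n"
  shows "\<forall>G\<in>{a11, a12, a16, a17, a18, a19, a21, a22, b3}. walks (compatible G) n = {per [PI] n}"
  unfolding ball_simps(5,7)
  by (intro conjI TrueI; rule walks_eq_from_3[OF _ _ assms]; simp add: walk_enumeration_simps; (auto)?)

lemma walks_compatible_a2:
  assumes "3 \<le> n"
  shows "walks (compatible a2) n = {per [PI] n, per [PX, PY] n, per [PY, PX] n, per [PZ] n}"
  by (rule walks_eq_from_3[OF _ _ assms]; simp add: walk_enumeration_simps; (auto)?)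

lemma walks_compatible_a3_a6:
  assumes "3 \<le> n"
  shows "\<forall>G\<in>{a3, a6}. walks (compatible G) n = {per [PI] n, per [PX] n, per [PY, PZ] n, per [PZ, PY] n}"
  unfolding ball_simps(5,7)
  by (intro conjI TrueI; rule walks_eq_from_3[OF _ _ assms]; simp add: walk_enumeration_simps; (auto)?)

lemma walks_compatible_a4_a7:
  assumes "3 \<le> n"
  shows "\<forall>G\<in>{a4, a7}. walks (compatible G) n = {per [PI] n, per [PX] n, per [PY] n, per [PZ] n}"
  unfolding ball_simps(5,7)
  by (intro conjI TrueI; rule walks_eq_from_3[OF _ _ assms]; simp add: walk_enumeration_simps; (auto)?)

lemma walks_compatible_a5_a10:
  assumes "3 \<le> n"
  shows "\<forall>G\<in>{a5, a10}. walks (compatible G) n =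
    {per [PI] n, per [PX, PY, PZ] n, per [PY, PZ, PX] n, per [PZ, PX, PY] n}"
  unfolding ball_simps(5,7)
  by (intro conjI TrueI; rule walks_eq_from_3[OF _ _ assms]; simp add: walk_enumeration_simps; (auto)?)

lemma walks_compatible_a8:
  assumes "3 \<le> n"
  shows "walks (compatible a8) n =
    {per [PI] n, per [PY] n, PX # replicate (n - 1) PI, PZ # replicate (n - 1) PY}"
  by (rule walks_eq_from_3[OF _ _ assms]; simp add: walk_enumeration_simps; (auto)?)

lemma walks_compatible_a9:
  assumes "3 \<le> n"
  shows "walks (compatible a9) n = {per [PI] n, PX # replicate (n - 1) PI,
    PY # PX # replicate (n - 2) PI, PZ # PX # replicate (n - 2) PI}"
  by (rule walks_eq_from_3[OF _ _ assms]; simp add: walk_enumeration_simps; (auto)?)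

lemma walks_compatible_a13_a20:
  assumes "3 \<le> n"
  shows "\<forall>G\<in>{a13, a20}. walks (compatible G) n = {per [PI] n, per [PX] n}"
  unfolding ball_simps(5,7)
  by (intro conjI TrueI; rule walks_eq_from_3[OF _ _ assms]; simp add: walk_enumeration_simps; (auto)?)

lemma walks_compatible_a14:
  assumes "3 \<le> n"
  shows "walks (compatible a14) n = {per [PI] n, per [PZ] n}"
  by (rule walks_eq_from_3[OF _ _ assms]; simp add: walk_enumeration_simps; (auto)?)

lemma walks_compatible_a15_b2_b4:
  assumes "3 \<le> n"
  shows "\<forall>G\<in>{a15, b2, b4}. walks (compatible G) n = {per [PI] n, PX # replicate (n - 1) PI}"
  unfolding ball_simps(5,7)
  by (intro conjI TrueI; rule walks_eq_from_3[OF _ _ assms]; simp add: walk_enumeration_simps; (auto)?)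

lemma walks_compatible_a0: "walks (compatible a0) n = tens_set {PI, PX} n \<union> tens_set {PY, PZ} n"
proof -
  have "compatible a0 p q \<longleftrightarrow> (p \<in> {PI, PX} \<longleftrightarrow> q \<in> {PI, PX})" for p q
    by (cases p; cases q; simp add: a0_def anticommute_def)
  moreover have "x \<notin> {PI, PX} \<longleftrightarrow> x \<in> {PY, PZ}" for x
    by (cases x) simp_all
  ultimately show ?thesis
    by (subst walks_of_equivalence[where h = "\<lambda>p. p \<in> {PI, PX}"]) (auto simp: tens_set_def)
qed

lemma walks_compatible_b0_b1:
  assumes "2 \<le> n"
  shows "\<forall>G\<in>{b0, b1}. walks (compatible G) n = tens_set {PI, PX} n"
proof -
  have "compatible G p q \<longleftrightarrow> p \<in> {PI, PX} \<and> q \<in> {PI, PX}" if "G \<in> {b0, b1}" for G p q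
    using that by (cases p; cases q; auto simp: b0_def b1_def anticommute_def)
  then show ?thesis
    using walks_of_conjunction[OF _ assms] by (auto simp: tens_set_def)
qed

theorem mainTheorem8:
  fixes n :: nat
  assumes "n \<ge> 3"
  shows
   "St n (lieG a0 n) = tens_set {PI, PX} n \<union> tens_set {PY, PZ} n \<and>
    St n (lieG a2 n) = {per [PI] n, per [PX,PY] n, per [PY,PX] n, per [PZ] n} \<and>
    St n (lieG a3 n) = {per [PI] n, per [PX] n, per [PY,PZ] n, per [PZ,PY] n} \<and>
    St n (lieG a6 n) = {per [PI] n, per [PX] n, per [PY,PZ] n, per [PZ,PY] n} \<and>
    St n (lieG a4 n) = {per [PI] n, per [PX] n, per [PY] n, per [PZ] n} \<and>
    St n (lieG a7 n) = {per [PI] n, per [PX] n, per [PY] n, per [PZ] n} \<and>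
    St n (lieG a5 n) = {per [PI] n, per [PX,PY,PZ] n, per [PY,PZ,PX] n, per [PZ,PX,PY] n} \<and>
    St n (lieG a10 n) = {per [PI] n, per [PX,PY,PZ] n, per [PY,PZ,PX] n, per [PZ,PX,PY] n} \<and>
    St n (lieG a8 n) = {per [PI] n, per [PY] n, PX # replicate (n - 1) PI, PZ # replicate (n - 1) PY} \<and>
    St n (lieG a9 n) = {per [PI] n, PX # replicate (n - 1) PI, PY # PX # replicate (n - 2) PI,
                        PZ # PX # replicate (n - 2) PI} \<and>
    St n (lieG a13 n) = {per [PI] n, per [PX] n} \<and>
    St n (lieG a20 n) = {per [PI] n, per [PX] n} \<and>
    St n (lieG a14 n) = {per [PI] n, per [PZ] n} \<and>
    St n (lieG a15 n) = {per [PI] n, PX # replicate (n - 1) PI} \<and>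
    St n (lieG b2 n) = {per [PI] n, PX # replicate (n - 1) PI} \<and>
    St n (lieG b4 n) = {per [PI] n, PX # replicate (n - 1) PI} \<and>
    St n (lieG b0 n) = tens_set {PI, PX} n \<and>
    St n (lieG b1 n) = tens_set {PI, PX} n \<and>
    (\<forall>G \<in> {a11, a12, a16, a17, a18, a19, a21, a22, b3}. St n (lieG G n) = {per [PI] n})"
proof -
  have "2 \<le> n"
    using assms by simp
  then show ?thesis
    unfolding St_lieG_eq_walks
    using walks_compatible_a0 walks_compatible_a2[OF assms] walks_compatible_a3_a6[OF assms]
      walks_compatible_a4_a7[OF assms] walks_compatible_a5_a10[OF assms]
      walks_compatible_a8[OF assms] walks_compatible_a9[OF assms]
      walks_compatible_a13_a20[OF assms] walks_compatible_a14[OF assms]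
      walks_compatible_a15_b2_b4[OF assms] walks_compatible_b0_b1 walks_compatible_trivial[OF assms]
    by simp
qed

end
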